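(* There exists an infinite maximal triangle-free graph which satisfies property $\mathscr{D}_k$ for every $k\ge1$ but which is not a blow-up of any finite graph.
   Context: A (possibly infinite) graph is maximal triangle-free if it contains no triangle but adding any new edge between non-adjacent vertices creates a triangle. Property $\mathscr{D}_k$: for every $m\in\{1,\dots,k\}$ and every sequence $x_1,\dots,x_{3m}$ of (not necessarily distinct) vertices there is a vertex $y$ with $|\{i\in[3m]: x_iy\in E(G)\}|\ge m+1$. A blow-up of $H$ is any graph obtained by replacing each vertex of $H$ by a non-empty independent set (possibly infinite) and each edge of $H$ by the complete bipartite graph between the corresponding sets, with no further edges. *)

theory Defs
  imports Main
begin

definition simple_graph :: "'a set \<Rightarrow> ('a \<Rightarrow> 'a \<Rightarrow> bool) \<Rightarrow> bool" where
  "simple_graph V E \<longleftrightarrow>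
     (\<forall>x y. E x y \<longrightarrow> x \<in> V \<and> y \<in> V) \<and>
     (\<forall>x y. E x y \<longrightarrow> E y x) \<and> (\<forall>x. \<not> E x x)"

definition triangle_free :: "'a set \<Rightarrow> ('a \<Rightarrow> 'a \<Rightarrow> bool) \<Rightarrow> bool" where
  "triangle_free V E \<longleftrightarrow>
     \<not> (\<exists>x\<in>V. \<exists>y\<in>V. \<exists>z\<in>V. E x y \<and> E y z \<and> E x z)"

definition maximal_triangle_free :: "'a set \<Rightarrow> ('a \<Rightarrow> 'a \<Rightarrow> bool) \<Rightarrow> bool" where
  "maximal_triangle_free V E \<longleftrightarrow>
     simple_graph V E \<and> triangle_free V E \<and>
     (\<forall>x\<in>V. \<forall>y\<in>V. x \<noteq> y \<and> \<not> E x y \<longrightarrow> (\<exists>z\<in>V. E x z \<and> E y z))"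

definition property_D :: "nat \<Rightarrow> 'a set \<Rightarrow> ('a \<Rightarrow> 'a \<Rightarrow> bool) \<Rightarrow> bool" where
  "property_D k V E \<longleftrightarrow>
     (\<forall>m\<in>{1..k}. \<forall>x :: nat \<Rightarrow> 'a. (\<forall>i\<in>{1..3*m}. x i \<in> V) \<longrightarrow>
        (\<exists>y\<in>V. card {i\<in>{1..3*m}. E (x i) y} \<ge> m + 1))"

text \<open>(V,E) is a blow-up of (W,F): there is a map f from V onto W (so every
  class f^{-1}(w) is a non-empty independent set) such that adjacency in
  (V,E) is exactly adjacency of the images in (W,F).\<close>
definition blow_up_of :: "'a set \<Rightarrow> ('a \<Rightarrow> 'a \<Rightarrow> bool) \<Rightarrow> 'b set \<Rightarrow> ('b \<Rightarrow> 'b \<Rightarrow> bool) \<Rightarrow> bool" where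
  "blow_up_of V E W F \<longleftrightarrow>
     (\<exists>f. f ` V = W \<and> (\<forall>u\<in>V. \<forall>v\<in>V. E u v \<longleftrightarrow> F (f u) (f v)))"

end

theory Submission
  imports Defs Complex_Main "HOL-Library.Nat_Bijection"
begin

text \<open>The graph lives on the dyadic rationals of \<open>[0,1)\<close>, each coded by infinitely many natural
  numbers; two points are adjacent when their distance lies strictly between 1/3 and 2/3.
  No three points of \<open>[0,1)\<close> are pairwise adjacent, and since no dyadic distance equals 1/3
  or 2/3, two non-adjacent points have a whole open interval of common neighbours, which
  contains a dyadic point.  For \<open>D\<^sub>k\<close>, put the \<open>3m\<close> given points on a grid of mesh
  \<open>1/N\<close>, with \<open>N\<close> a power of 2 and \<open>N = 3k - 1\<close>: each of them is adjacent to at least \<open>k\<close>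
  grid points, so by double counting some grid point is adjacent to more than \<open>m\<close> of them.
  Finally the points \<open>1/2\<^sup>j\<close>, \<open>j \<ge> 2\<close>, have pairwise distinct neighbourhoods, which is impossible
  in a blow-up of a finite graph.\<close>

definition dyadic_level :: "nat \<Rightarrow> nat" where
  "dyadic_level n = snd (prod_decode n)"

definition dyadic :: "nat \<Rightarrow> real" where
  "dyadic n = real (fst (prod_decode n) mod 2 ^ dyadic_level n) / 2 ^ dyadic_level n"

lemma dyadic_prod_encode: "t < 2 ^ j \<Longrightarrow> dyadic (prod_encode (t, j)) = real t / 2 ^ j"
  by (simp add: dyadic_def dyadic_level_def prod_encode_inverse)

lemma dyadic_in_unit_interval: "dyadic n \<in> {0..<1}"
proof -
  have "real (fst (prod_decode n) mod 2 ^ dyadic_level n) < 2 ^ dyadic_level n"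
    by (metis mod_less_divisor of_nat_less_numeral_power_cancel_iff pos2 zero_less_power)
  then show ?thesis
    by (simp add: dyadic_def)
qed

lemma dyadic_on_grid:
  assumes "dyadic_level n \<le> J"
  obtains s where "s < 2 ^ J" "dyadic n = real s / 2 ^ J"
proof
  let ?j = "dyadic_level n" and ?r = "fst (prod_decode n) mod 2 ^ dyadic_level n"
  have split: "(2::nat) ^ J = 2 ^ ?j * 2 ^ (J - ?j)"
    using assms by (simp flip: power_add)
  show "?r * 2 ^ (J - ?j) < 2 ^ J"
    unfolding split by simp
  show "dyadic n = real (?r * 2 ^ (J - ?j)) / 2 ^ J"
    unfolding dyadic_def using arg_cong[OF split, of real] by simp
qed

lemma dyadic_dense:
  assumes "0 \<le> a" "a < b" "b \<le> 1"
  shows "\<exists>n. a < dyadic n \<and> dyadic n < b"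
proof -
  obtain j where j: "1 / (b - a) < (2::real) ^ j"
    using real_arch_pow[of 2 "1 / (b - a)"] by auto
  have step: "1 / 2 ^ j < b - a"
    using j assms by (simp add: field_simps)
  define t where "t = nat \<lfloor>a * 2 ^ j\<rfloor> + 1"
  have t: "real t = of_int \<lfloor>a * 2 ^ j\<rfloor> + 1"
    unfolding t_def using assms by simp
  have lower: "a < real t / 2 ^ j"
    using t by (simp add: field_simps) linarith
  have "real t / 2 ^ j \<le> a + 1 / 2 ^ j"
    using t by (simp add: field_simps)
  with step have upper: "real t / 2 ^ j < b"
    by linarith
  then have "real t < b * 2 ^ j"
    by (simp add: field_simps)
  also have "\<dots> \<le> 2 ^ j"
    using assms by simp
  finally have "t < 2 ^ j"
    by simp
  with lower upper show ?thesis
    by (metis dyadic_prod_encode)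
qed

lemma three_not_dvd_mult_pow2:
  fixes e :: int
  assumes "e \<in> {1, -1, 2, -2}"
  shows "\<not> 3 dvd e * 2 ^ J"
proof -
  have "coprime (3::int) (2 ^ J)"
    by simp
  then show ?thesis
    using assms by (auto simp: coprime_dvd_mult_left_iff)
qed

lemma dyadic_dist_not_third: "3 * \<bar>dyadic u - dyadic v\<bar> \<notin> {1, 2}"
proof
  assume third: "3 * \<bar>dyadic u - dyadic v\<bar> \<in> {1, 2}"
  define J where "J = dyadic_level u + dyadic_level v"
  obtain s where s: "dyadic u = real s / 2 ^ J"
    using dyadic_on_grid[of u J] J_def by auto
  obtain s' where s': "dyadic v = real s' / 2 ^ J"
    using dyadic_on_grid[of v J] J_def by auto
  have "3 * (dyadic u - dyadic v) \<in> of_int ` {1, -1, 2, -2}"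
    using third by (auto simp: abs_if split: if_splits)
  then obtain e :: int where e: "e \<in> {1, -1, 2, -2}" "3 * (dyadic u - dyadic v) = of_int e"
    by blast
  then have "real_of_int (3 * (int s - int s')) = real_of_int (e * 2 ^ J)"
    using s s' by (simp add: field_simps)
  then have "3 * (int s - int s') = e * 2 ^ J"
    by linarith
  then show False
    using three_not_dvd_mult_pow2[OF e(1)] by (metis dvd_triv_left)
qed

definition far :: "real \<Rightarrow> real \<Rightarrow> bool" where
  "far a b \<longleftrightarrow> 1/3 < \<bar>a - b\<bar> \<and> \<bar>a - b\<bar> < 2/3"

lemma far_commute: "far a b \<longleftrightarrow> far b a"
  by (simp add: far_def abs_minus_commute)

lemma not_far_self: "\<not> far a a"
  by (simp add: far_def)

lemma far_triangle_free:
  assumes "a \<in> {0..<1}" "b \<in> {0..<1}" "c \<in> {0..<1}"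
  shows "\<not> (far a b \<and> far b c \<and> far a c)"
  using assms by (auto simp: far_def abs_if)

lemma far_common_interval_le:
  assumes "a \<le> b" "a \<in> {0..<1}" "b \<in> {0..<1}" "\<not> far a b" "3 * \<bar>a - b\<bar> \<notin> {1, 2}"
  shows "\<exists>l u. 0 \<le> l \<and> l < u \<and> u \<le> 1 \<and> (\<forall>z. l < z \<and> z < u \<longrightarrow> far a z \<and> far b z)"
proof -
  have "b - a < 1/3 \<or> 2/3 < b - a"
    using assms by (auto simp: far_def)
  then consider "2/3 < b - a" | "b - a < 1/3" "b < 2/3" | "b - a < 1/3" "2/3 \<le> b"
    by linarith
  then show ?thesis
  proof cases
    case 1
    then show ?thesis
      using assms by (intro exI[of _ "a + 1/3"] exI[of _ "b - 1/3"]) (auto simp: far_def)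
  next
    case 2
    then show ?thesis
      using assms by (intro exI[of _ "b + 1/3"] exI[of _ "min 1 (a + 2/3)"]) (auto simp: far_def)
  next
    case 3
    then show ?thesis
      using assms by (intro exI[of _ "b - 2/3"] exI[of _ "a - 1/3"]) (auto simp: far_def)
  qed
qed

lemma far_common_interval:
  assumes "a \<in> {0..<1}" "b \<in> {0..<1}" "\<not> far a b" "3 * \<bar>a - b\<bar> \<notin> {1, 2}"
  shows "\<exists>l u. 0 \<le> l \<and> l < u \<and> u \<le> 1 \<and> (\<forall>z. l < z \<and> z < u \<longrightarrow> far a z \<and> far b z)"
proof (cases "a \<le> b")
  case True
  then show ?thesis
    using far_common_interval_le assms by blast
next
  case False
  then show ?thesis
    using far_common_interval_le[of b a] assms by (simp add: far_commute abs_minus_commute conj_commute)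
qed

lemma far_separating_interval:
  assumes "0 \<le> a" "a < b" "b \<le> 1/4"
  shows "\<forall>z. a + 2/3 < z \<and> z < b + 2/3 \<longrightarrow> far b z \<and> \<not> far a z"
  using assms by (auto simp: far_def)

lemma far_on_grid:
  fixes s t k N :: nat
  assumes "3 * k = N + 1" "k \<le> \<bar>real t - real s\<bar>" "\<bar>real t - real s\<bar> + 1 \<le> 2 * real k"
  shows "far (real s / N) (real t / N)"
proof -
  define d where "d = \<bar>real t - real s\<bar>"
  have "real N = 3 * real k - 1"
    using assms(1) by (simp add: algebra_simps flip: of_nat_mult of_nat_add)
  moreover have "k \<le> d" "d + 1 \<le> 2 * real k"
    using assms(2,3) by (simp_all add: d_def)
  ultimately have "real N < 3 * d" "3 * d < 2 * real N" "0 < real N"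
    by linarith+
  moreover have "\<bar>real s / N - real t / N\<bar> = d / N"
    unfolding d_def by (simp add: abs_minus_commute flip: diff_divide_distrib)
  ultimately show ?thesis
    by (simp add: far_def field_simps)
qed

lemma card_far_on_grid:
  fixes s k N :: nat
  assumes "s < N" "3 * k = N + 1"
  shows "k \<le> card {t\<in>{..<N}. far (real s / N) (real t / N)}"
proof -
  \<comment> \<open>the grid points at cyclic distance \<open>k, \<dots>, 2k - 1\<close> to the right of \<open>s\<close>\<close>
  define f where "f l = (if s + k + l < N then s + k + l else s + k + l - N)" for l
  have "inj_on f {..<k}"
  proof (rule inj_onI)
    fix a b assume "a \<in> {..<k}" "b \<in> {..<k}" "f a = f b"
    then show "a = b"
      using assms unfolding f_def by (simp split: if_splits)
  qed
  moreover have "f ` {..<k} \<subseteq> {t\<in>{..<N}. far (real s / N) (real t / N)}"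
  proof (rule image_subsetI)
    fix l assume "l \<in> {..<k}"
    then have "l < k"
      by simp
    define d where "d = (if s + k + l < N then k + l else N - k - l)"
    have "\<bar>real (f l) - real s\<bar> = real d"
      using \<open>l < k\<close> assms by (auto simp: f_def d_def of_nat_diff)
    moreover have "k \<le> d" "d + 1 \<le> 2 * k"
      using \<open>l < k\<close> assms unfolding d_def by auto
    ultimately have "far (real s / N) (real (f l) / N)"
      by (intro far_on_grid[OF assms(2)]) simp_all
    moreover have "f l < N"
      using \<open>l < k\<close> assms by (auto simp: f_def)
    ultimately show "f l \<in> {t\<in>{..<N}. far (real s / N) (real t / N)}"
      by simp
  qed
  ultimately have "card (f ` {..<k}) \<le> card {t\<in>{..<N}. far (real s / N) (real t / N)}"
    by (intro card_mono) simp_all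
  with \<open>inj_on f {..<k}\<close> show ?thesis
    by (simp add: card_image)
qed

lemma double_counting_ex_card_gt:
  assumes "finite I" "finite T" "\<And>i. i \<in> I \<Longrightarrow> k \<le> card {t\<in>T. R i t}"
    and "card T * m < card I * k"
  shows "\<exists>t\<in>T. m < card {i\<in>I. R i t}"
proof (rule ccontr)
  assume "\<not> ?thesis"
  then have "(\<Sum>t\<in>T. card {i\<in>I. R i t}) \<le> card T * m"
    using sum_bounded_above[of T "\<lambda>t. card {i\<in>I. R i t}" m] by (simp add: not_less)
  moreover have "(\<Sum>t\<in>T. card {i\<in>I. R i t}) = (\<Sum>i\<in>I. card {t\<in>T. R i t})"
  proof -
    have "(\<Sum>t\<in>T. card {i\<in>I. R i t}) = (\<Sum>t\<in>T. \<Sum>i\<in>I. of_bool (R i t))"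
      using assms(1) by (simp add: Int_def conj_commute)
    also have "\<dots> = (\<Sum>i\<in>I. \<Sum>t\<in>T. of_bool (R i t))"
      by (rule sum.swap)
    also have "\<dots> = (\<Sum>i\<in>I. card {t\<in>T. R i t})"
      using assms(2) by (simp add: Int_def conj_commute)
    finally show ?thesis .
  qed
  moreover have "card I * k \<le> (\<Sum>i\<in>I. card {t\<in>T. R i t})"
    using sum_bounded_below[of I k "\<lambda>i. card {t\<in>T. R i t}"] assms(3) by (simp add: mult.commute)
  ultimately show False
    using assms(4) by linarith
qed

lemma three_dvd_Suc_pow2_odd: "3 dvd Suc (2 ^ (2 * a + 1))"
proof (induction a)
  case (Suc a)
  have "2 ^ (2 * Suc a + 1) = 4 * (2::nat) ^ (2 * a + 1)"
    by simp
  with Suc show ?case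
    by presburger
qed simp

definition dyadic_graph :: "nat \<Rightarrow> nat \<Rightarrow> bool" where
  "dyadic_graph u v \<longleftrightarrow> far (dyadic u) (dyadic v)"

lemma dyadic_graph_ex_many_neighbours:
  fixes x :: "nat \<Rightarrow> nat"
  assumes "1 \<le> m"
  shows "\<exists>y. m + 1 \<le> card {i\<in>{1..3*m}. dyadic_graph (x i) y}"
proof -
  let ?I = "{1..3*m}"
  \<comment> \<open>\<open>J\<close> is odd, so that \<open>N \<equiv> 2 (mod 3)\<close>\<close>
  define J where "J = 2 * (\<Sum>i\<in>?I. dyadic_level (x i)) + 1"
  define N :: nat where "N = 2 ^ J"
  define k where "k = Suc N div 3"
  have k: "3 * k = N + 1"
    using three_dvd_Suc_pow2_odd unfolding k_def N_def J_def by auto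
  define y where "y t = prod_encode (t, J)" for t
  have "k \<le> card {t\<in>{..<N}. dyadic_graph (x i) (y t)}" if "i \<in> ?I" for i
  proof -
    have "dyadic_level (x i) \<le> J"
      using member_le_sum[OF that, of "\<lambda>i. dyadic_level (x i)"] unfolding J_def by simp
    then obtain s where "s < N" "dyadic (x i) = real s / N"
      using dyadic_on_grid unfolding N_def by auto
    moreover have "dyadic (y t) = real t / N" if "t < N" for t
      using dyadic_prod_encode that unfolding y_def N_def by simp
    ultimately have "{t\<in>{..<N}. dyadic_graph (x i) (y t)} = {t\<in>{..<N}. far (real s / N) (real t / N)}"
      by (auto simp: dyadic_graph_def)
    with card_far_on_grid[OF \<open>s < N\<close> k] show ?thesis
      by simp
  qed
  moreover have "card {..<N} * m < card ?I * k"
    using k assms by simp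
  ultimately obtain t where "m < card {i\<in>?I. dyadic_graph (x i) (y t)}"
    using double_counting_ex_card_gt[of ?I "{..<N}" k "\<lambda>i t. dyadic_graph (x i) (y t)" m]
    by auto
  then show ?thesis
    by (intro exI[of _ "y t"]) simp
qed

lemma dyadic_graph_common_neighbour:
  assumes "\<not> dyadic_graph u v"
  shows "\<exists>z. dyadic_graph u z \<and> dyadic_graph v z"
proof -
  obtain l r where "0 \<le> l" "l < r" "r \<le> 1" and between: "\<And>z. l < z \<and> z < r \<Longrightarrow> far (dyadic u) z \<and> far (dyadic v) z"
    using far_common_interval[of "dyadic u" "dyadic v"] assms dyadic_in_unit_interval dyadic_dist_not_third
    unfolding dyadic_graph_def by fastforce
  then obtain z where "l < dyadic z" "dyadic z < r"
    using dyadic_dense by blast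
  with between show ?thesis
    unfolding dyadic_graph_def by blast
qed

lemma maximal_triangle_free_dyadic_graph: "maximal_triangle_free UNIV dyadic_graph"
  unfolding maximal_triangle_free_def simple_graph_def triangle_free_def
proof (intro conjI)
  show "\<forall>x y. dyadic_graph x y \<longrightarrow> dyadic_graph y x" "\<forall>x. \<not> dyadic_graph x x"
    by (simp_all add: dyadic_graph_def far_commute not_far_self)
  show "\<not> (\<exists>x\<in>UNIV. \<exists>y\<in>UNIV. \<exists>z\<in>UNIV. dyadic_graph x y \<and> dyadic_graph y z \<and> dyadic_graph x z)"
    using far_triangle_free[OF dyadic_in_unit_interval dyadic_in_unit_interval dyadic_in_unit_interval]
    unfolding dyadic_graph_def by blast
  show "\<forall>x\<in>UNIV. \<forall>y\<in>UNIV. x \<noteq> y \<and> \<not> dyadic_graph x y \<longrightarrow> (\<exists>z\<in>UNIV. dyadic_graph x z \<and> dyadic_graph y z)"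
    using dyadic_graph_common_neighbour by blast
qed simp

lemma property_D_dyadic_graph: "property_D k UNIV dyadic_graph"
  unfolding property_D_def using dyadic_graph_ex_many_neighbours by auto

lemma blow_up_of_finite_ex_twins:
  assumes "blow_up_of V E W F" "finite W" "S \<subseteq> V" "infinite S"
  shows "\<exists>u\<in>S. \<exists>v\<in>S. u \<noteq> v \<and> (\<forall>z\<in>V. E u z \<longleftrightarrow> E v z)"
proof -
  obtain f where f: "f ` V = W" "\<And>u v. u \<in> V \<Longrightarrow> v \<in> V \<Longrightarrow> E u v \<longleftrightarrow> F (f u) (f v)"
    using assms(1) unfolding blow_up_of_def by blast
  have "finite (f ` S)"
    using f(1) assms(2,3) finite_subset[of "f ` S" W] by blast
  with assms(4) have "\<not> inj_on f S"
    using finite_imageD by blast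
  then obtain u v where "u \<in> S" "v \<in> S" "u \<noteq> v" "f u = f v"
    unfolding inj_on_def by blast
  moreover have "E u z \<longleftrightarrow> E v z" if "z \<in> V" for z
    using f(2)[of u z] f(2)[of v z] \<open>f u = f v\<close> \<open>u \<in> S\<close> \<open>v \<in> S\<close> assms(3) that by auto
  ultimately show ?thesis
    by blast
qed

lemma dyadic_graph_separates:
  assumes "dyadic u < dyadic v" "dyadic v \<le> 1/4"
  shows "\<exists>z. dyadic_graph v z \<and> \<not> dyadic_graph u z"
proof -
  have "0 \<le> dyadic u"
    using dyadic_in_unit_interval by simp
  moreover obtain z where "dyadic u + 2/3 < dyadic z" "dyadic z < dyadic v + 2/3"
    using dyadic_dense[of "dyadic u + 2/3" "dyadic v + 2/3"] assms \<open>0 \<le> dyadic u\<close> by auto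
  ultimately show ?thesis
    using far_separating_interval assms
    unfolding dyadic_graph_def by blast
qed

lemma not_blow_up_of_finite_dyadic_graph:
  assumes "finite W"
  shows "\<not> blow_up_of UNIV dyadic_graph W F"
proof
  assume blow_up: "blow_up_of UNIV dyadic_graph W F"
  define g where "g j = prod_encode (1, j + 2)" for j
  have dyadic_g: "dyadic (g j) = 1 / 2 ^ (j + 2)" for j
  proof -
    have "1 < (2::nat) ^ (j + 2)"
      by (rule one_less_power) simp_all
    then show ?thesis
      unfolding g_def using dyadic_prod_encode by (metis of_nat_1)
  qed
  have "inj (dyadic \<circ> g)"
    by (rule injI) (simp add: dyadic_g power_inject_exp)
  then have "inj_on dyadic (range g)" "infinite (range g)"
    by (simp_all add: inj_on_imageI inj_on_imageI2 finite_image_iff)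
  then obtain u v where "u \<in> range g" "v \<in> range g" "u \<noteq> v"
      and twins: "\<forall>z\<in>UNIV. dyadic_graph u z \<longleftrightarrow> dyadic_graph v z"
    using blow_up_of_finite_ex_twins[OF blow_up assms subset_UNIV \<open>infinite (range g)\<close>] by metis
  have "dyadic u \<noteq> dyadic v"
    using \<open>inj_on dyadic (range g)\<close> \<open>u \<in> range g\<close> \<open>v \<in> range g\<close> \<open>u \<noteq> v\<close> by (meson inj_onD)
  moreover have not_twins: "\<not> (\<forall>z\<in>UNIV. dyadic_graph a z \<longleftrightarrow> dyadic_graph b z)"
    if "dyadic a < dyadic b" "b \<in> range g" for a b
  proof -
    have "dyadic b \<le> 1/4"
      using \<open>b \<in> range g\<close> by (auto simp: dyadic_g field_simps)
    with dyadic_graph_separates[OF that(1)] show ?thesis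
      by blast
  qed
  ultimately show False
    using not_twins[of u v] not_twins[of v u] twins \<open>u \<in> range g\<close> \<open>v \<in> range g\<close>
    by (meson linorder_neqE_linordered_idom)
qed

theorem theorem5p2:
  shows "\<exists>(V :: nat set) (E :: nat \<Rightarrow> nat \<Rightarrow> bool).
           infinite V \<and> maximal_triangle_free V E \<and>
           (\<forall>k\<ge>1. property_D k V E) \<and>
           (\<forall>(W :: nat set) F. finite W \<longrightarrow> simple_graph W F \<longrightarrow> \<not> blow_up_of V E W F)"
  using maximal_triangle_free_dyadic_graph property_D_dyadic_graph not_blow_up_of_finite_dyadic_graph
  by blast

end
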